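(* Fix $\lambda>0$ and let $M_\lambda$ be as in the context. Then $M_\lambda'(x)=0$ for $0<x<1$ and for $1<x<2$, and for all $x>1$, \[ M'_{\lambda}(x+1)=\frac{\int_1^x\lambda\sinh(\lambda t)M'_{\lambda}(t)\,dt+\lambda\sinh(\lambda)}{\cosh(\lambda x)-1}. \]
   Context: For $\lambda>0$, $M_\lambda:[0,\infty)\to\mathbb R$ is defined by $M_\lambda(x)=0$ for $0\le x\le1$ and, for all $x>0$, $M_{\lambda}(x+1)=\int_0^x\frac{\lambda e^{-\lambda t}}{1-e^{-\lambda x}}\bigl(M_{\lambda}(t)+M_{\lambda}(x-t)\bigr)\,dt+1$. This determines $M_\lambda$ uniquely, interval by interval. $M_\lambda(x)$ is the expected number of unit intervals at saturation in the parking process on $(0,x)$ in which left endpoints are drawn from the truncated exponential density $\lambda e^{-\lambda t}/(1-e^{-\lambda(x-1)})$ on $(0,x-1)$, and overlapping candidates are discarded. *)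

theory Defs
  imports "HOL-Analysis.Analysis"
begin

text \<open>M is the function M_lambda of the paper: it vanishes on [0,1] and satisfies the
renewal-type recursion for every x > 0. This determines M uniquely on [0,infinity)
(values at negative arguments are irrelevant).\<close>
definition is_M_lambda :: "real \<Rightarrow> (real \<Rightarrow> real) \<Rightarrow> bool" where
  "is_M_lambda lam M \<longleftrightarrow>
     (\<forall>x. 0 \<le> x \<and> x \<le> 1 \<longrightarrow> M x = 0) \<and>
     (\<forall>x>0. M (x + 1) =
        integral {0..x} (\<lambda>t. lam * exp (- lam * t) / (1 - exp (- lam * x)) * (M t + M (x - t))) + 1)"

end

theory Submission
  imports Defs
begin

text \<open>
  Substituting \<open>t \<mapsto> x - t\<close> in half of the integral symmetrises the kernel, and the
  recursion becomes
  \<open>M (x + 1) = 1 + \<lambda> (sinh (\<lambda>x) / (cosh (\<lambda>x) - 1) C x - S x)\<close>, where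
  \<open>C x\<close> and \<open>S x\<close> are the integrals of \<open>cosh (\<lambda>t) M t\<close> and \<open>sinh (\<lambda>t) M t\<close> over \<open>[0, x]\<close>.
  Apart from its jump at 1, \<open>M\<close> is therefore continuous, by induction over unit intervals,
  and differentiating gives \<open>M' (x + 1) = N x / (cosh (\<lambda>x) - 1)\<close> for \<open>x > 1\<close>, with
  \<open>N x = \<lambda> sinh (\<lambda>x) M x - \<lambda>\<^sup>2 C x\<close>. Since \<open>N' t = \<lambda> sinh (\<lambda>t) M' t\<close> for \<open>t > 1\<close>
  except at the corner \<open>t = 2\<close> of \<open>M\<close>, and \<open>N\<close> tends to \<open>\<lambda> sinh \<lambda>\<close> at \<open>1\<close>, the fundamental
  theorem of calculus identifies the numerator in the theorem with \<open>N x\<close>.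
\<close>

lemma integrable_on_piecewise_continuous:
  fixes f g h :: "real \<Rightarrow> 'a::banach"
  assumes "a \<le> c" "c \<le> b" and "continuous_on {a..c} g" "continuous_on {c..b} h"
    and "\<And>t. a \<le> t \<Longrightarrow> t < c \<Longrightarrow> f t = g t" "\<And>t. c < t \<Longrightarrow> t \<le> b \<Longrightarrow> f t = h t"
  shows "f integrable_on {a..b}"
proof (rule Henstock_Kurzweil_Integration.integrable_combine)
  show "f integrable_on {a..c}"
    by (rule integrable_spike_finite[of "{c}" _ _ g]) (use assms in \<open>auto intro: integrable_continuous_interval\<close>)
  show "f integrable_on {c..b}"
    by (rule integrable_spike_finite[of "{c}" _ _ h]) (use assms in \<open>auto intro: integrable_continuous_interval\<close>)
qed (use assms in auto)

lemma has_integral_reflect_interval: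
  fixes f :: "real \<Rightarrow> 'a::banach"
  assumes "(f has_integral i) {a..b}"
  shows "((\<lambda>t. f (a + b - t)) has_integral i) {a..b}"
proof -
  have "(\<lambda>t. (1 / (-1::real)) *\<^sub>R t + - ((1 / (-1::real)) *\<^sub>R (a + b))) ` cbox a b = {a..b}"
    by (auto intro: image_eqI[where x="a + b - y" for y])
  then show ?thesis
    using has_integral_affinity[of f i a b "-1" "a + b"] assms by (simp add: algebra_simps)
qed

lemma exp_kernel_symmetrization:
  fixes lam x t :: real
  assumes "lam * x \<noteq> 0"
  shows "exp (- lam * t) / (1 - exp (- lam * x)) + exp (- lam * (x - t)) / (1 - exp (- lam * x))
    = sinh (lam * x) / (cosh (lam * x) - 1) * cosh (lam * t) - sinh (lam * t)"
proof -
  define w where "w = exp (lam * x) - 1"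
  define v where "v = exp (lam * t)"
  have w: "w \<noteq> 0" "w + 1 > 0" using assms by (auto simp: w_def)
  have v: "v > 0" by (simp add: v_def)
  have exps: "exp (- lam * t) = 1 / v" "exp (- lam * (x - t)) = v / (w + 1)"
    "1 - exp (- lam * x) = w / (w + 1)"
    using w by (simp_all add: w_def v_def exp_diff exp_minus field_simps)
  have hyps: "sinh (lam * x) = (w + 1 - 1 / (w + 1)) / 2" "cosh (lam * x) - 1 = w * w / (2 * (w + 1))"
    "sinh (lam * t) = (v - 1 / v) / 2" "cosh (lam * t) = (v + 1 / v) / 2"
    using w by (simp_all add: w_def v_def sinh_def cosh_def exp_minus field_simps)
  show ?thesis unfolding exps hyps using w v
    by (simp add: divide_simps) (simp add: algebra_simps)
qed

lemma has_real_derivative_sinh_over_cosh_minus_1: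
  assumes "c * x \<noteq> 0"
  shows "((\<lambda>y. sinh (c * y) / (cosh (c * y) - 1)) has_real_derivative - c / (cosh (c * x) - 1)) (at x)"
proof -
  have nz: "cosh (c * x) - 1 \<noteq> 0" using assms by simp
  have deriv: "((\<lambda>y. sinh (c * y) / (cosh (c * y) - 1)) has_real_derivative
      (cosh (c * x) * c * (cosh (c * x) - 1) - sinh (c * x) * (sinh (c * x) * c)) / (cosh (c * x) - 1)\<^sup>2) (at x)"
    using nz by (auto intro!: derivative_eq_intros simp: power2_eq_square)
  have numerator: "cosh (c * x) * c * (cosh (c * x) - 1) - sinh (c * x) * (sinh (c * x) * c)
      = - c * (cosh (c * x) - 1)"
    using cosh_square_eq[of "c * x"] by algebra
  have "- c * (cosh (c * x) - 1) / (cosh (c * x) - 1)\<^sup>2 = - c / (cosh (c * x) - 1)"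
    using nz by (simp add: power2_eq_square)
  with deriv show ?thesis
    unfolding numerator by simp
qed

locale M_lambda =
  fixes lam :: real and M :: "real \<Rightarrow> real"
  assumes lam_pos: "lam > 0" and is_M: "is_M_lambda lam M"
begin

lemma M_eq_0: "0 \<le> x \<Longrightarrow> x \<le> 1 \<Longrightarrow> M x = 0"
  using is_M unfolding is_M_lambda_def by blast

lemma M_recursion: "x > 0 \<Longrightarrow> M (x + 1) =
   integral {0..x} (\<lambda>t. lam * exp (- lam * t) / (1 - exp (- lam * x)) * (M t + M (x - t))) + 1"
  using is_M unfolding is_M_lambda_def by blast

lemma M_eq_1:
  assumes "1 < x" "x \<le> 2"
  shows "M x = 1"
proof -
  have "integral {0..x - 1} (\<lambda>t. lam * exp (- lam * t) / (1 - exp (- lam * (x - 1))) * (M t + M (x - 1 - t))) = 0"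
    using assms by (subst integral_cong[of _ _ "\<lambda>t. 0"]) (auto simp: M_eq_0)
  then show ?thesis
    using M_recursion[of "x - 1"] assms by simp
qed

definition M_ext :: "real \<Rightarrow> real" where
  "M_ext t = (if t \<le> 1 then 1 else M t)"

lemma M_ext_eq_1: "x \<le> 2 \<Longrightarrow> M_ext x = 1"
  by (simp add: M_ext_def M_eq_1)

definition M_integral :: "(real \<Rightarrow> real) \<Rightarrow> real \<Rightarrow> real" where
  "M_integral g x = integral {0..x} (\<lambda>t. g t * M t)"

lemma integrable_weighted_M_upto:
  assumes "continuous_on {..b} M_ext" and "continuous_on {0..b} g"
  shows "(\<lambda>t. g t * M t) integrable_on {0..b}"
proof (cases "b < 0")
  case False
  show ?thesis
  proof (rule integrable_on_piecewise_continuous[where c="min 1 b"])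
    show "continuous_on {0..min 1 b} (\<lambda>t. 0 :: real)" by simp
    show "continuous_on {min 1 b..b} (\<lambda>t. g t * M_ext t)"
      by (intro continuous_intros continuous_on_subset[OF assms(1)] continuous_on_subset[OF assms(2)])
        (use \<open>\<not> b < 0\<close> in auto)
  qed (use \<open>\<not> b < 0\<close> in \<open>auto simp: M_eq_0 M_ext_def\<close>)
qed (simp add: integrable_on_empty)

lemma M_recursion_hyperbolic:
  assumes x: "x > 0" and cont: "continuous_on {..x} M_ext"
  shows "M (x + 1) = 1 + lam * (sinh (lam * x) / (cosh (lam * x) - 1) * M_integral (\<lambda>t. cosh (lam * t)) x
                                - M_integral (\<lambda>t. sinh (lam * t)) x)"
proof -
  define k where "k t = lam * exp (- lam * t) / (1 - exp (- lam * x))" for t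
  have int: "(\<lambda>t. g t * M t) integrable_on {0..x}" if "continuous_on UNIV g" for g
    by (rule integrable_weighted_M_upto[OF cont continuous_on_subset[OF that]]) simp
  have k_cont: "continuous_on UNIV k" "continuous_on UNIV (\<lambda>t. k (x - t))"
    using lam_pos x by (auto simp: k_def intro!: continuous_intros)
  have "((\<lambda>t. k (x - t) * M t) has_integral integral {0..x} (\<lambda>t. k (x - t) * M t)) {0..x}"
    by (intro integrable_integral int k_cont)
  from has_integral_reflect_interval[OF this]
  have "((\<lambda>t. k t * M (x - t)) has_integral integral {0..x} (\<lambda>t. k (x - t) * M t)) {0..x}"
    by simp
  moreover have "((\<lambda>t. k t * M t) has_integral integral {0..x} (\<lambda>t. k t * M t)) {0..x}"
    by (intro integrable_integral int k_cont)
  ultimately have "integral {0..x} (\<lambda>t. k t * (M t + M (x - t)))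
      = integral {0..x} (\<lambda>t. k t * M t) + integral {0..x} (\<lambda>t. k (x - t) * M t)"
    by (intro integral_unique) (simp add: distrib_left has_integral_add)
  also have "\<dots> = integral {0..x} (\<lambda>t. (k t + k (x - t)) * M t)"
    unfolding distrib_right by (intro integral_add[symmetric] int k_cont)
  also have "\<dots> = integral {0..x} (\<lambda>t. lam * (sinh (lam * x) / (cosh (lam * x) - 1) * (cosh (lam * t) * M t)
                                            - sinh (lam * t) * M t))"
  proof (rule integral_cong)
    fix t
    have kernel: "k t + k (x - t) = lam * (sinh (lam * x) / (cosh (lam * x) - 1) * cosh (lam * t) - sinh (lam * t))"
      using exp_kernel_symmetrization[of lam x t] lam_pos x
      unfolding k_def add_divide_distrib[symmetric] distrib_left[symmetric] times_divide_eq_right[symmetric]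
      by simp
    show "(k t + k (x - t)) * M t = lam * (sinh (lam * x) / (cosh (lam * x) - 1) * (cosh (lam * t) * M t)
                                            - sinh (lam * t) * M t)"
      by (simp only: kernel) (simp add: algebra_simps)
  qed
  also have "\<dots> = lam * (sinh (lam * x) / (cosh (lam * x) - 1) * M_integral (\<lambda>t. cosh (lam * t)) x
                       - M_integral (\<lambda>t. sinh (lam * t)) x)"
  proof -
    have cosh_int: "(\<lambda>t. cosh (lam * t) * M t) integrable_on {0..x}"
      and sinh_int: "(\<lambda>t. sinh (lam * t) * M t) integrable_on {0..x}"
      by (auto intro!: int continuous_intros)
    show ?thesis
      unfolding M_integral_def integral_mult_right
        integral_diff[OF integrable_on_mult_right[OF cosh_int] sinh_int] ..
  qed
  finally show ?thesis
    using M_recursion[OF x] by (simp add: k_def)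
qed

lemma continuous_on_M_integral:
  assumes "continuous_on {..b} M_ext" and "continuous_on UNIV g"
  shows "continuous_on {0..b} (M_integral g)"
  unfolding M_integral_def[abs_def]
  by (intro indefinite_integral_continuous_1 integrable_weighted_M_upto assms continuous_on_subset[OF assms(2)]) simp

lemma continuous_M_ext_step:
  assumes b: "2 \<le> b" and cont: "continuous_on {..b} M_ext"
  shows "continuous_on {..b + 1} M_ext"
proof -
  define F where "F x = 1 + lam * (sinh (lam * x) / (cosh (lam * x) - 1) * M_integral (\<lambda>t. cosh (lam * t)) x
                                  - M_integral (\<lambda>t. sinh (lam * t)) x)" for x
  have "continuous_on {1..b} F"
    unfolding F_def using lam_pos
    by (intro continuous_intros continuous_on_subset[OF continuous_on_M_integral[OF cont]]) auto
  then have F_cont: "continuous_on {2..b + 1} (\<lambda>y. F (y - 1))"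
    by (rule continuous_on_compose2) (auto intro!: continuous_intros)
  have M_ext_eq_F: "M_ext y = F (y - 1)" if "y \<in> {2..b + 1}" for y
  proof -
    have "M ((y - 1) + 1) = F (y - 1)"
      unfolding F_def using that
      by (intro M_recursion_hyperbolic continuous_on_subset[OF cont]) auto
    then show ?thesis using that by (simp add: M_ext_def)
  qed
  have "continuous_on {2..b + 1} M_ext"
    using continuous_on_eq[OF F_cont] M_ext_eq_F by simp
  moreover have "continuous_on {..2} M_ext"
    by (rule continuous_on_eq[OF continuous_on_const]) (simp add: M_ext_eq_1)
  ultimately have "continuous_on ({..2} \<union> {2..b + 1}) M_ext"
    by (intro continuous_on_closed_Un) auto
  moreover have "{..2} \<union> {2..b + 1} = {..b + 1}"
    using b by auto
  ultimately show ?thesis by simp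
qed

lemma continuous_M_ext: "continuous_on S M_ext"
proof -
  have upto: "continuous_on {..real n + 2} M_ext" for n
  proof (induction n)
    case 0
    show ?case by (rule continuous_on_eq[OF continuous_on_const]) (simp add: M_ext_eq_1)
  next
    case (Suc n)
    then show ?case using continuous_M_ext_step[of "real n + 2"] by (simp add: algebra_simps)
  qed
  have "isCont M_ext t" for t
  proof -
    obtain n where "t < real n"
      using reals_Archimedean2 by blast
    then show ?thesis
      using continuous_on_interior[OF upto[of n]] by simp
  qed
  then show ?thesis by (simp add: continuous_at_imp_continuous_on)
qed

lemma eventually_nhds_M_eq_M_ext: "1 < t \<Longrightarrow> \<forall>\<^sub>F y in nhds t. M y = M_ext y"
  unfolding eventually_nhds by (intro exI[of _ "{1<..}"]) (auto simp: M_ext_def)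

lemma isCont_M: "1 < t \<Longrightarrow> isCont M t"
  using isCont_cong[OF eventually_nhds_M_eq_M_ext] continuous_M_ext[of UNIV]
  by (simp add: continuous_on_eq_continuous_at)

lemma M_integral_has_derivative:
  assumes x: "1 < x" and g: "continuous_on UNIV g"
  shows "(M_integral g has_real_derivative g x * M x) (at x)"
proof -
  have integrable: "(\<lambda>t. g t * M t) integrable_on {0..x + 1}"
    by (rule integrable_weighted_M_upto[OF continuous_M_ext continuous_on_subset[OF g]]) simp
  have cont: "isCont (\<lambda>t. g t * M t) x"
    using isCont_M[OF x] g by (simp add: continuous_on_eq_continuous_at)
  have "((\<lambda>u. integral {0..u} (\<lambda>t. g t * M t)) has_vector_derivative g x * M x) (at x within {0..x + 1} - {})"
    by (rule integral_has_vector_derivative_continuous_at[OF integrable _ _ continuous_at_imp_continuous_within[OF cont]])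
      (use x in auto)
  moreover have "at x within {0..x + 1} = at x"
    using x by (intro at_within_Icc_at) auto
  ultimately show ?thesis
    unfolding M_integral_def[abs_def] has_real_derivative_iff_has_vector_derivative by simp
qed

definition deriv_numerator :: "real \<Rightarrow> real" where
  "deriv_numerator x = lam * sinh (lam * x) * M_ext x - lam\<^sup>2 * M_integral (\<lambda>t. cosh (lam * t)) x"

lemma M_has_derivative_shifted:
  assumes x: "1 < x"
  shows "(M has_real_derivative deriv_numerator x / (cosh (lam * x) - 1)) (at (x + 1))"
proof -
  define C where "C = M_integral (\<lambda>t. cosh (lam * t))"
  define S where "S = M_integral (\<lambda>t. sinh (lam * t))"
  define q where "q y = sinh (lam * y) / (cosh (lam * y) - 1)" for y
  have nz: "cosh (lam * x) - 1 \<noteq> 0"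
    using lam_pos x by simp
  have dq: "(q has_real_derivative - lam / (cosh (lam * x) - 1)) (at x)"
    unfolding q_def[abs_def] by (rule has_real_derivative_sinh_over_cosh_minus_1) (use lam_pos x in simp)
  have dC: "(C has_real_derivative cosh (lam * x) * M x) (at x)"
    unfolding C_def by (rule M_integral_has_derivative[OF x]) (intro continuous_intros)
  have dS: "(S has_real_derivative sinh (lam * x) * M x) (at x)"
    unfolding S_def by (rule M_integral_has_derivative[OF x]) (intro continuous_intros)
  have deriv_F: "((\<lambda>y. 1 + lam * (q y * C y - S y)) has_real_derivative
      0 + lam * (- lam / (cosh (lam * x) - 1) * C x + cosh (lam * x) * M x * q x - sinh (lam * x) * M x)) (at x)"
    by (intro DERIV_add DERIV_const DERIV_cmult DERIV_diff DERIV_mult dq dC dS)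
  have derivative_value: "0 + lam * (- lam / (cosh (lam * x) - 1) * C x + cosh (lam * x) * M x * q x - sinh (lam * x) * M x)
      = deriv_numerator x / (cosh (lam * x) - 1)"
  proof -
    have field_identity: "lam * (- lam / d * C x + c * m * (s / d) - s * m) = (lam * s * m - lam\<^sup>2 * C x) / d"
      if "d \<noteq> 0" "c = d + 1" for c d s m
      using that by (simp add: field_simps power2_eq_square)
    have "lam * (- lam / (cosh (lam * x) - 1) * C x + cosh (lam * x) * M x * q x - sinh (lam * x) * M x)
        = (lam * sinh (lam * x) * M x - lam\<^sup>2 * C x) / (cosh (lam * x) - 1)"
      unfolding q_def by (rule field_identity) (use nz in simp_all)
    then show ?thesis
      using x by (simp add: deriv_numerator_def C_def M_ext_def)
  qed
  have "1 + lam * (q y * C y - S y) = M (y + 1)" if "y \<in> {0<..}" for y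
    using M_recursion_hyperbolic[OF _ continuous_M_ext] that by (simp add: q_def C_def S_def)
  then have "((\<lambda>y. M (y + 1)) has_real_derivative deriv_numerator x / (cosh (lam * x) - 1)) (at x)"
    using has_field_derivative_transform_within_open[OF deriv_F[unfolded derivative_value], of "{0<..}"] x by simp
  then show ?thesis
    by (simp add: DERIV_shift)
qed

lemma M_has_derivative_0_1: "0 < t \<Longrightarrow> t < 1 \<Longrightarrow> (M has_real_derivative 0) (at t)"
  by (rule has_field_derivative_transform_within_open[where f="\<lambda>_. 0" and S="{0<..<1}"])
    (auto simp: M_eq_0)

lemma M_has_derivative_1_2: "1 < t \<Longrightarrow> t < 2 \<Longrightarrow> (M has_real_derivative 0) (at t)"
  by (rule has_field_derivative_transform_within_open[where f="\<lambda>_. 1" and S="{1<..<2}"])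
    (auto simp: M_eq_1)

lemma M_differentiable: "1 < t \<Longrightarrow> t \<noteq> 2 \<Longrightarrow> M differentiable (at t)"
  using M_has_derivative_1_2[of t] M_has_derivative_shifted[of "t - 1"]
  by (cases "t < 2") (auto simp: real_differentiable_def)

lemma deriv_numerator_has_derivative:
  assumes t: "1 < t" and dM: "(M has_real_derivative D) (at t)"
  shows "(deriv_numerator has_real_derivative lam * sinh (lam * t) * D) (at t)"
proof -
  have dM_ext: "(M_ext has_real_derivative D) (at t)"
    by (rule has_field_derivative_transform_within_open[OF dM, where S="{1<..}"]) (use t in \<open>auto simp: M_ext_def\<close>)
  have dC: "(M_integral (\<lambda>t. cosh (lam * t)) has_real_derivative cosh (lam * t) * M t) (at t)"
    by (rule M_integral_has_derivative[OF t]) (intro continuous_intros)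
  have ds: "((\<lambda>y. lam * sinh (lam * y)) has_real_derivative lam * (cosh (lam * t) * lam)) (at t)"
    by (auto intro!: derivative_eq_intros)
  have "(deriv_numerator has_real_derivative
      lam * (cosh (lam * t) * lam) * M_ext t + D * (lam * sinh (lam * t)) - lam\<^sup>2 * (cosh (lam * t) * M t)) (at t)"
    unfolding deriv_numerator_def[abs_def] by (intro DERIV_diff DERIV_mult DERIV_cmult ds dM_ext dC)
  moreover have "lam * (cosh (lam * t) * lam) * M_ext t + D * (lam * sinh (lam * t)) - lam\<^sup>2 * (cosh (lam * t) * M t)
      = lam * sinh (lam * t) * D"
    using t by (simp add: M_ext_def power2_eq_square)
  ultimately show ?thesis by simp
qed

lemma continuous_on_deriv_numerator: "continuous_on {0..b} deriv_numerator"
  unfolding deriv_numerator_def[abs_def]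
  by (intro continuous_intros continuous_M_ext continuous_on_M_integral)

lemma deriv_numerator_1: "deriv_numerator 1 = lam * sinh lam"
proof -
  have "M_integral (\<lambda>t. cosh (lam * t)) 1 = 0"
    unfolding M_integral_def by (subst integral_cong[of _ _ "\<lambda>_. 0"]) (auto simp: M_eq_0)
  then show ?thesis
    by (simp add: deriv_numerator_def M_ext_def)
qed

lemma has_integral_sinh_deriv_M:
  assumes x: "1 < x"
  shows "((\<lambda>t. lam * sinh (lam * t) * deriv M t) has_integral deriv_numerator x - lam * sinh lam) {1..x}"
proof -
  have "((\<lambda>t. lam * sinh (lam * t) * deriv M t) has_integral deriv_numerator x - deriv_numerator 1) {1..x}"
  proof (rule fundamental_theorem_of_calculus_interior_strong[where S="{2}"])
    fix t assume "t \<in> {1<..<x} - {2}"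
    then have "(deriv_numerator has_real_derivative lam * sinh (lam * t) * deriv M t) (at t)"
      using M_differentiable by (intro deriv_numerator_has_derivative) (auto simp: DERIV_deriv_iff_real_differentiable)
    then show "(deriv_numerator has_vector_derivative lam * sinh (lam * t) * deriv M t) (at t)"
      by (simp add: has_real_derivative_iff_has_vector_derivative)
  next
    show "continuous_on {1..x} deriv_numerator"
      by (rule continuous_on_subset[OF continuous_on_deriv_numerator[of x]]) auto
  qed (use x in auto)
  then show ?thesis by (simp add: deriv_numerator_1)
qed

end

theorem mainTheorem7:
  fixes lam :: real and M :: "real \<Rightarrow> real"
  assumes "lam > 0" and "is_M_lambda lam M"
  shows "(\<forall>x. (0 < x \<and> x < 1) \<or> (1 < x \<and> x < 2) \<longrightarrow> (M has_real_derivative 0) (at x))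
    \<and> (\<forall>x>1. (M has_real_derivative
            ((integral {1..x} (\<lambda>t. lam * sinh (lam * t) * deriv M t) + lam * sinh lam)
              / (cosh (lam * x) - 1))) (at (x + 1)))"
proof -
  interpret M_lambda lam M
    using assms by unfold_locales
  show ?thesis
  proof (intro conjI allI impI)
    fix x :: real
    assume "(0 < x \<and> x < 1) \<or> (1 < x \<and> x < 2)"
    then show "(M has_real_derivative 0) (at x)"
      using M_has_derivative_0_1 M_has_derivative_1_2 by blast
  next
    fix x :: real
    assume x: "1 < x"
    have "integral {1..x} (\<lambda>t. lam * sinh (lam * t) * deriv M t) + lam * sinh lam = deriv_numerator x"
      using integral_unique[OF has_integral_sinh_deriv_M[OF x]] by simp
    then show "(M has_real_derivative
        (integral {1..x} (\<lambda>t. lam * sinh (lam * t) * deriv M t) + lam * sinh lam) / (cosh (lam * x) - 1)) (at (x + 1))"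
      using M_has_derivative_shifted[OF x] by simp
  qed
qed

end
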